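(* Let $0<q<1$, $\Re\eta>-1$, $\lambda\ge1$, and let $\phi(z)=1+\sum_{n\ge1}E_nz^n$ be analytic in $\Delta$ with $\Re\phi>0$, $\phi(0)=1$, $E_1>0$. Put $$\Gamma=2(\lambda\widetilde{[3]}_q-1)L_3+\lambda(\lambda-1)\widetilde{[2]}_q^{\,2}L_2^2,\qquad \Xi=2(\lambda\widetilde{[3]}_q-1)E_1^2L_3+\lambda\big[(\lambda-1)E_1^2+2\lambda(E_1-E_2)\big]\widetilde{[2]}_q^{\,2}L_2^2,$$ assumed nonzero. If $f(z)=z+\sum_{n\ge2}a_nz^n$ belongs to $\widetilde{\mathcal{S}^*_{\Sigma}}{}^{\eta}_q(1,\lambda;\phi)$, then $$|a_2|\le\min\left\{\frac{E_1}{\lambda|L_2|\widetilde{[2]}_q},\ \sqrt{\frac{2(|E_2-E_1|+E_1)}{|\Gamma|}},\ \frac{E_1\sqrt{2E_1}}{\sqrt{|\Xi|}}\right\},\qquad |a_3|\le\frac{E_1}{(\lambda\widetilde{[3]}_q-1)|L_3|}+\min\left\{\frac{E_1^2}{\lambda^2\widetilde{[2]}_q^{\,2}|L_2|^2},\ \frac{2(|E_2-E_1|+E_1)}{|\Gamma|}\right\}.$$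
   Context: $\Delta=\{z\in\mathbb{C}:|z|<1\}$. $\Sigma$ denotes the class of analytic $f(z)=z+\sum_{n\ge2}a_nz^n$ on $\Delta$ that are univalent and whose inverse $g=f^{-1}$ extends univalently to $\Delta$. For $0<q<1$, $\chi\in\mathbb C$: $\widetilde{[\chi]}_q=\frac{q^{\chi}-q^{-\chi}}{q-q^{-1}}$. Symmetric $q$-derivative: $\widetilde{\mathcal D}_qF(z)=\frac{F(qz)-F(q^{-1}z)}{(q-q^{-1})z}$ ($z\ne0$), $\widetilde{\mathcal D}_qF(0)=F'(0)$. For $\Re\eta>-1$, $\mathcal J^{\eta}_qf(z)=z+\sum_{n\ge2}L_na_nz^n$ with $L_n=\widetilde{[1+\eta]}_q/\widetilde{[n+\eta]}_q$. Subordination $F\prec G$: $F=G\circ h$, $h$ analytic, $h(0)=0$, $|h|<1$. Principal branches for powers. The class $\widetilde{\mathcal{S}^*_{\Sigma}}{}^{\eta}_q(1,\lambda;\phi)$ consists of $f\in\Sigma$, $g=f^{-1}$, with $F=\mathcal J^\eta_qf$, $G=\mathcal J^\eta_qg$ satisfying $$\frac{2z[\widetilde{\mathcal D}_qF(z)]^{\lambda}}{F(z)-F(-z)}\prec\phi(z),\qquad \frac{2w[\widetilde{\mathcal D}_qG(w)]^{\lambda}}{G(w)-G(-w)}\prec\phi(w)\qquad(z,w\in\Delta).$$ *)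

theory Defs
  imports "HOL-Analysis.Analysis"
begin

definition qnum :: "real \<Rightarrow> complex \<Rightarrow> complex" where
  "qnum q c = (complex_of_real q powr c - complex_of_real q powr (- c))
                / (complex_of_real q - inverse (complex_of_real q))"

definition Lq :: "real \<Rightarrow> complex \<Rightarrow> nat \<Rightarrow> complex" where
  "Lq q \<eta> n = qnum q (1 + \<eta>) / qnum q (of_nat n + \<eta>)"

definition tcoef :: "(complex \<Rightarrow> complex) \<Rightarrow> nat \<Rightarrow> complex" where
  "tcoef f n = (deriv ^^ n) f 0 / of_nat (fact n)"

definition Jq :: "real \<Rightarrow> complex \<Rightarrow> (complex \<Rightarrow> complex) \<Rightarrow> complex \<Rightarrow> complex" where
  "Jq q \<eta> f z = z + (\<Sum>n. (if 2 \<le> n then Lq q \<eta> n * tcoef f n * z ^ n else 0))"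

definition sym_qderiv :: "real \<Rightarrow> (complex \<Rightarrow> complex) \<Rightarrow> complex \<Rightarrow> complex" where
  "sym_qderiv q F z = (if z = 0 then deriv F 0
     else (F (complex_of_real q * z) - F (z / complex_of_real q))
          / ((complex_of_real q - inverse (complex_of_real q)) * z))"

definition subordinate :: "(complex \<Rightarrow> complex) \<Rightarrow> (complex \<Rightarrow> complex) \<Rightarrow> bool" where
  "subordinate F G \<longleftrightarrow> (\<exists>h. h holomorphic_on ball 0 1 \<and> h 0 = 0 \<and>
      (\<forall>z\<in>ball 0 1. h z \<in> ball 0 1 \<and> F z = G (h z)))"

definition inverse_extension :: "(complex \<Rightarrow> complex) \<Rightarrow> (complex \<Rightarrow> complex) \<Rightarrow> bool" where
  "inverse_extension f g \<longleftrightarrow> g holomorphic_on ball 0 1 \<and> inj_on g (ball 0 1) \<and>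
      (\<forall>z\<in>ball 0 1. f z \<in> ball 0 1 \<longrightarrow> g (f z) = z)"

definition bi_univalent :: "(complex \<Rightarrow> complex) \<Rightarrow> bool" where
  "bi_univalent f \<longleftrightarrow> f holomorphic_on ball 0 1 \<and> f 0 = 0 \<and> deriv f 0 = 1 \<and>
      inj_on f (ball 0 1) \<and> (\<exists>g. inverse_extension f g)"

text \<open>The expression 2z[D_q F(z)]^lambda / (F(z) - F(-z)), given its limit value 1 at z = 0.\<close>
definition qexpr :: "real \<Rightarrow> real \<Rightarrow> (complex \<Rightarrow> complex) \<Rightarrow> complex \<Rightarrow> complex" where
  "qexpr q lam F z = (if z = 0 then 1
     else 2 * z * (sym_qderiv q F z) powr (complex_of_real lam) / (F z - F (- z)))"

definition qclass :: "real \<Rightarrow> complex \<Rightarrow> real \<Rightarrow> (complex \<Rightarrow> complex) \<Rightarrow> (complex \<Rightarrow> complex) set" where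
  "qclass q \<eta> lam \<phi> = {f. bi_univalent f \<and> (\<exists>g. inverse_extension f g \<and>
      subordinate (qexpr q lam (Jq q \<eta> f)) \<phi> \<and>
      subordinate (qexpr q lam (Jq q \<eta> g)) \<phi>)}"

end

theory Submission
  imports Defs "HOL-Complex_Analysis.Complex_Analysis"
begin

text \<open>
  Put \<open>F = J\<^sup>\<eta>\<^sub>q f\<close>. Subordination writes \<open>2z (D\<^sub>q F)\<^sup>\<lambda> / (F(z) - F(-z))\<close> as
  \<open>\<phi>(h(z))\<close> with a Schwarz function \<open>h\<close>. The left-hand side is the binomial series of the
  \<open>q\<close>-derivative of \<open>F\<close> divided by the odd part of \<open>F(z)/z\<close>, so comparing the coefficients of
  \<open>z\<close> and \<open>z\<^sup>2\<close> gives \<open>E\<^sub>1c\<^sub>1 = \<lambda>[2]\<^sub>qL\<^sub>2a\<^sub>2\<close> and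
  \<open>E\<^sub>1c\<^sub>2 + E\<^sub>2c\<^sub>1\<^sup>2 = (\<lambda>[3]\<^sub>q - 1)L\<^sub>3a\<^sub>3 + \<lambda>(\<lambda>-1)/2 [2]\<^sub>q\<^sup>2L\<^sub>2\<^sup>2a\<^sub>2\<^sup>2\<close>,
  where \<open>c\<^sub>1, c\<^sub>2\<close> are the first coefficients of \<open>h\<close>. The inverse \<open>g\<close> has coefficients
  \<open>-a\<^sub>2\<close> and \<open>2a\<^sub>2\<^sup>2 - a\<^sub>3\<close> and satisfies the same relations with a second Schwarz function.
  Eliminating between the four relations yields identities for \<open>\<Gamma>a\<^sub>2\<^sup>2\<close>, \<open>\<Xi>a\<^sub>2\<^sup>2\<close> and
  \<open>a\<^sub>3 - a\<^sub>2\<^sup>2\<close>, and the bounds \<open>|c\<^sub>1| \<le> 1\<close>, \<open>|c\<^sub>2| \<le> 1 - |c\<^sub>1|\<^sup>2\<close> (Schwarz--Pick at the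
  origin) turn them into the estimates.
\<close>

unbundle no vec_syntax

section \<open>\<open>q\<close>-numbers\<close>

lemma qnum_of_nat:
  assumes "0 < q"
  shows "qnum q (of_nat k) = (of_real q ^ k - inverse (of_real q) ^ k) / (of_real q - inverse (of_real q))"
  using assms by (simp add: qnum_def powr_minus powr_nat' power_inverse)

lemma q_minus_inverse_neq_0:
  assumes "0 < q" "q \<noteq> 1"
  shows "complex_of_real q - inverse (of_real q) \<noteq> 0"
proof -
  have "q - inverse q \<noteq> 0"
  proof
    assume "q - inverse q = 0"
    then have "(q - 1) * (q + 1) = 0" using assms(1) by (simp add: field_simps)
    then show False using assms by simp
  qed
  then show ?thesis by (metis of_real_diff of_real_eq_0_iff of_real_inverse)
qed

lemma qnum_0 [simp]: "qnum q 0 = 0"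
  by (simp add: qnum_def)

lemma qnum_1:
  assumes "0 < q" "q \<noteq> 1"
  shows "qnum q 1 = 1"
  using qnum_of_nat[OF assms(1), of 1] q_minus_inverse_neq_0[OF assms] by simp

lemma qnum_2:
  assumes "0 < q" "q \<noteq> 1"
  shows "qnum q 2 = of_real (q + inverse q)"
proof -
  let ?c = "complex_of_real q"
  have "?c ^ 2 - inverse ?c ^ 2 = (?c - inverse ?c) * (?c + inverse ?c)"
    by (simp add: algebra_simps power2_eq_square)
  then show ?thesis
    using qnum_of_nat[OF assms(1), of 2] q_minus_inverse_neq_0[OF assms] by simp
qed

lemma qnum_3:
  assumes "0 < q" "q \<noteq> 1"
  shows "qnum q 3 = of_real (q\<^sup>2 + 1 + inverse (q\<^sup>2))"
proof -
  let ?c = "complex_of_real q"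
  have "?c ^ 3 - inverse ?c ^ 3 = (?c - inverse ?c) * (?c\<^sup>2 + 1 + inverse ?c ^ 2)"
    using assms(1) by (simp add: algebra_simps power2_eq_square power3_eq_cube)
  then show ?thesis
    using qnum_of_nat[OF assms(1), of 3] q_minus_inverse_neq_0[OF assms] by (simp add: power_inverse)
qed

lemma qnum_2_3_real:
  assumes q: "0 < q" "q < 1" and lam: "1 \<le> lam"
  obtains Q2 Q3 where "qnum q 2 = of_real Q2" "qnum q 3 = of_real Q3" "0 < Q2" "0 < lam * Q3 - 1"
proof -
  have "q \<noteq> 1"
    using q by simp
  define Q3 where "Q3 = q\<^sup>2 + 1 + inverse (q\<^sup>2)"
  have "1 < Q3"
    using q by (simp add: Q3_def add_pos_pos)
  moreover have "Q3 \<le> lam * Q3"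
    using mult_right_mono[OF lam, of Q3] \<open>1 < Q3\<close> by simp
  ultimately have "0 < lam * Q3 - 1"
    by linarith
  moreover have "0 < q + inverse q"
    using q by (simp add: add_pos_pos)
  ultimately show ?thesis
    using that qnum_2[OF q(1) \<open>q \<noteq> 1\<close>] qnum_3[OF q(1) \<open>q \<noteq> 1\<close>, folded Q3_def] by blast
qed

lemma norm_of_real_q_powr: "0 < q \<Longrightarrow> cmod (complex_of_real q powr s) = q powr Re s"
  by (subst norm_powr_real_powr) auto

lemma norm_q_minus_inverse:
  assumes "0 < q" "q < 1"
  shows "cmod (complex_of_real q - inverse (of_real q)) = inverse q - q"
proof -
  have "q < inverse q"
    using assms by (metis one_less_inverse less_trans)
  then show ?thesis by (metis abs_of_neg diff_less_0_iff_less minus_diff_eq norm_of_real of_real_diff of_real_inverse)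
qed

lemma norm_qnum_ge_1:
  assumes q: "0 < q" "q < 1" and s: "1 \<le> Re s"
  shows "1 \<le> cmod (qnum q s)"
proof -
  have "q powr Re s \<le> q"
    using powr_mono'[of 1 "Re s" q] q s by simp
  moreover from this have "inverse q \<le> q powr (- Re s)"
    using q by (simp add: powr_minus le_imp_inverse_le)
  ultimately have "inverse q - q \<le> q powr (- Re s) - q powr Re s"
    by simp
  also have "\<dots> \<le> cmod (complex_of_real q powr s - complex_of_real q powr (- s))"
    using norm_triangle_ineq3[of "complex_of_real q powr (- s)" "complex_of_real q powr s"] q
    by (simp add: norm_of_real_q_powr norm_minus_commute)
  finally have "inverse q - q \<le> cmod (complex_of_real q powr s - complex_of_real q powr (- s))" .
  moreover have "0 < inverse q - q"
    using q by (simp add: one_less_inverse less_trans)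
  ultimately show ?thesis
    by (simp add: qnum_def norm_divide norm_q_minus_inverse[OF q] le_divide_eq_1)
qed

lemma qnum_neq_0:
  assumes q: "0 < q" "q < 1" and s: "0 < Re s"
  shows "qnum q s \<noteq> 0"
proof -
  have "q powr Re s < q powr (- Re s)"
    using powr_less_mono'[of q "- Re s" "Re s"] q s by simp
  then have "complex_of_real q powr s \<noteq> complex_of_real q powr (- s)"
    using q by (metis norm_of_real_q_powr uminus_complex.sel(1) less_irrefl)
  then show ?thesis
    using q_minus_inverse_neq_0[of q] q by (simp add: qnum_def)
qed

lemma norm_Lq_le:
  assumes q: "0 < q" "q < 1" and "-1 < Re \<eta>" "2 \<le> n"
  shows "cmod (Lq q \<eta> n) \<le> cmod (qnum q (1 + \<eta>))"
proof -
  have "1 \<le> cmod (qnum q (of_nat n + \<eta>))"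
    using norm_qnum_ge_1[OF q] assms(3,4) by simp
  then show ?thesis
    by (simp add: Lq_def norm_divide divide_le_eq) (metis mult_left_mono mult.right_neutral norm_ge_zero)
qed

lemma Lq_neq_0:
  assumes q: "0 < q" "q < 1" and "-1 < Re \<eta>" "1 \<le> n"
  shows "Lq q \<eta> n \<noteq> 0"
  using qnum_neq_0[OF q, of "1 + \<eta>"] qnum_neq_0[OF q, of "of_nat n + \<eta>"] assms(3,4)
  by (simp add: Lq_def)

section \<open>Power series\<close>

lemma tcoef_conv_fps_nth:
  "f has_fps_expansion F \<Longrightarrow> tcoef f n = F $ n"
  by (simp add: tcoef_def fps_nth_fps_expansion)

lemma has_fps_expansion_tcoef:
  assumes "f holomorphic_on ball 0 1"
  shows "f has_fps_expansion Abs_fps (tcoef f)"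
  using has_fps_expansion_fps_expansion[OF _ _ assms] by (simp add: fps_expansion_def tcoef_def[abs_def])

lemma has_fps_expansion_transfer_ball:
  assumes "f has_fps_expansion F" "0 < r" "\<And>z. z \<in> ball 0 r \<Longrightarrow> f z = g z"
  shows "g has_fps_expansion F"
proof -
  have "\<forall>\<^sub>F z in nhds 0. f z = g z"
    using eventually_nhds_in_open[of "ball 0 r" 0] assms(2,3) by (auto elim!: eventually_mono)
  then show ?thesis
    using assms(1) has_fps_expansion_cong by blast
qed

lemma has_fps_expansion_divide_X:
  fixes F :: "complex fps"
  assumes F: "f has_fps_expansion F" and F0: "F $ 0 = 0"
  shows "(\<lambda>x. if x = 0 then F $ 1 else f x / x) has_fps_expansion fps_shift 1 F"
proof (cases "F = 0")
  case True
  then have "\<forall>\<^sub>F x in nhds 0. 0 = (if x = 0 then F $ 1 else f x / x)"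
    using F by (auto simp: has_fps_expansion_def elim!: eventually_mono)
  then show ?thesis
    by (rule has_fps_expansion_cong[OF _ refl, THEN iffD1]) (simp add: True)
next
  case False
  then have "1 \<le> subdegree F"
    using F0 by (intro subdegree_geI) auto
  then show ?thesis
    using has_fps_expansion_shift[OF F, of 1 "F $ 1", unfolded power_one_right] by simp
qed

lemma fps_conv_radius_le_of_norm_nth_le:
  fixes A B :: "complex fps"
  assumes "\<And>n. cmod (B $ n) \<le> C * cmod (A $ n)"
  shows "fps_conv_radius A \<le> fps_conv_radius B"
  unfolding fps_conv_radius_def
proof (rule conv_radius_geI_ex')
  fix r :: real
  assume r: "0 < r" "ereal r < conv_radius (fps_nth A)"
  have "summable (\<lambda>n. cmod (A $ n * of_real r ^ n))"
    using r by (intro norm_summable_fps) (simp add: fps_conv_radius_def)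
  then have "summable (\<lambda>n. C * cmod (A $ n * of_real r ^ n))"
    by (rule summable_mult)
  then show "summable (\<lambda>n. B $ n * of_real r ^ n)"
  proof (rule summable_comparison_test')
    fix n
    show "cmod (B $ n * of_real r ^ n) \<le> C * cmod (A $ n * of_real r ^ n)"
      using mult_right_mono[OF assms[of n], of "r ^ n"] r by (simp add: norm_mult norm_power)
  qed
qed

lemma fps_compose_nth_123:
  fixes F G :: "'a :: comm_ring_1 fps"
  assumes "G $ 0 = 0"
  shows "(F oo G) $ 1 = F $ 1 * G $ 1"
    and "(F oo G) $ 2 = F $ 1 * G $ 2 + F $ 2 * (G $ 1)\<^sup>2"
    and "(F oo G) $ 3 = F $ 1 * G $ 3 + 2 * F $ 2 * G $ 1 * G $ 2 + F $ 3 * (G $ 1) ^ 3"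
  using assms
  by (simp_all add: fps_compose_nth numeral_3_eq_3 numeral_2_eq_2 fps_mult_nth
      atLeast0AtMost atMost_Suc power2_eq_square power3_eq_cube algebra_simps)

lemma fps_mult_nth_12:
  fixes F G :: "'a :: comm_ring_1 fps"
  shows "(F * G) $ 1 = F $ 0 * G $ 1 + F $ 1 * G $ 0"
    and "(F * G) $ 2 = F $ 0 * G $ 2 + F $ 1 * G $ 1 + F $ 2 * G $ 0"
  by (simp_all add: fps_mult_nth numeral_2_eq_2 atLeast0AtMost atMost_Suc)

lemma gbinomial_2: "(a :: 'a :: field_char_0) gchoose 2 = a * (a - 1) / 2"
  by (simp add: gbinomial_Suc numeral_2_eq_2 atLeast0AtMost atMost_Suc)

lemma fps_compose_inverse_coeffs:
  fixes F G :: "'a :: comm_ring_1 fps"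
  assumes GF: "G oo F = fps_X" and F0: "F $ 0 = 0" and F1: "F $ 1 = 1"
  shows "G $ 1 = 1" "G $ 2 = - F $ 2" "G $ 3 = 2 * (F $ 2)\<^sup>2 - F $ 3"
proof -
  note nth = fps_compose_nth_123[OF F0, of G, unfolded GF F1]
  show G1: "G $ 1 = 1"
    using nth(1) by simp
  show G2: "G $ 2 = - F $ 2"
    using nth(2) G1 by (simp add: add_eq_0_iff)
  show "G $ 3 = 2 * (F $ 2)\<^sup>2 - F $ 3"
    using nth(3) G1 G2 by (simp add: algebra_simps power2_eq_square)
qed

section \<open>Schwarz functions\<close>

lemma norm_Moebius_le_1:
  fixes a c :: complex
  assumes a: "cmod a \<le> 1" and c: "cmod c < 1"
  shows "cmod ((a - c) / (1 - cnj c * a)) \<le> 1"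
proof -
  have "(cmod (1 - cnj c * a))\<^sup>2 - (cmod (a - c))\<^sup>2 = (1 - (cmod a)\<^sup>2) * (1 - (cmod c)\<^sup>2)"
    unfolding cmod_power2 by (simp add: algebra_simps power2_eq_square)
  also have "\<dots> \<ge> 0"
    using a c by (intro mult_nonneg_nonneg) (simp_all add: power_le_one)
  finally have "(cmod (a - c))\<^sup>2 \<le> (cmod (1 - cnj c * a))\<^sup>2"
    by simp
  then have "cmod (a - c) \<le> cmod (1 - cnj c * a)"
    by (rule power2_le_imp_le) simp
  moreover have "cmod (cnj c * a) < 1"
    using mult_left_le[OF a, of "cmod c"] c by (simp add: norm_mult)
  then have "1 - cnj c * a \<noteq> 0"
    by auto
  ultimately show ?thesis
    by (simp add: norm_divide divide_le_eq_1)
qed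

lemma norm_deriv_le_1_of_closed_disc:
  assumes hol: "h holomorphic_on ball 0 1" and h0: "h 0 = 0"
    and bnd: "\<And>z. z \<in> ball 0 1 \<Longrightarrow> cmod (h z) \<le> 1"
  shows "cmod (deriv h 0) \<le> 1"
proof (rule field_le_mult_one_interval)
  fix t :: real
  assume t: "0 < t" "t < 1"
  have "cmod (deriv (\<lambda>z. of_real t * h z) 0) \<le> 1"
  proof (rule Schwarz_Lemma(2)[where \<xi> = 0])
    show "cmod (of_real t * h z) < 1" if "cmod z < 1" for z
    proof -
      have "cmod (h z) \<le> 1"
        using bnd that by simp
      then have "t * cmod (h z) \<le> t"
        using t by (simp add: mult_left_le)
      moreover have "cmod (of_real t * h z) = t * cmod (h z)"
        using t by (simp add: norm_mult)
      ultimately show ?thesis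
        using t by linarith
    qed
  qed (use hol h0 in \<open>auto intro: holomorphic_intros\<close>)
  moreover have "deriv (\<lambda>z. of_real t * h z) 0 = of_real t * deriv h 0"
    using hol by (intro deriv_cmult holomorphic_on_imp_differentiable_at) auto
  ultimately show "t * cmod (deriv h 0) \<le> 1"
    using t by (simp add: norm_mult)
qed

lemma norm_deriv_le_Schwarz_Pick:
  assumes hol: "k holomorphic_on ball 0 1" and bnd: "\<And>z. z \<in> ball 0 1 \<Longrightarrow> cmod (k z) \<le> 1"
    and k0: "cmod (k 0) < 1"
  shows "cmod (deriv k 0) \<le> 1 - (cmod (k 0))\<^sup>2"
proof -
  define c where "c = k 0"
  define D where "D = 1 - (cmod c)\<^sup>2"
  have D_pos: "0 < D"
    using k0 by (simp add: D_def c_def power_less_one_iff abs_less_iff)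
  have den: "1 - cnj c * k z \<noteq> 0" if "z \<in> ball 0 1" for z
  proof -
    have "cmod (cnj c * k z) < 1"
      using mult_left_le[OF bnd[OF that], of "cmod c"] k0 by (simp add: c_def norm_mult)
    then show ?thesis
      by auto
  qed
  define m where "m z = (k z - c) / (1 - cnj c * k z)" for z
  have "cmod (deriv m 0) \<le> 1"
  proof (rule norm_deriv_le_1_of_closed_disc)
    show "m holomorphic_on ball 0 1"
      unfolding m_def using hol den by (intro holomorphic_intros) auto
    show "cmod (m z) \<le> 1" if "z \<in> ball 0 1" for z
      unfolding m_def using norm_Moebius_le_1[OF bnd[OF that]] k0 by (simp add: c_def)
  qed (simp add: m_def c_def)
  moreover have "deriv m 0 = deriv k 0 / of_real D"
  proof -
    have "(k has_field_derivative deriv k 0) (at 0)"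
      using hol by (intro holomorphic_derivI[of _ "ball 0 1"]) auto
    then have "(m has_field_derivative deriv k 0 * (1 - cnj c * c) / ((1 - cnj c * c) * (1 - cnj c * c))) (at 0)"
      unfolding m_def using den[of 0]
      by (auto intro!: derivative_eq_intros simp: c_def algebra_simps)
    moreover have "1 - cnj c * c = of_real D"
      using complex_norm_square[of c] by (simp add: D_def mult.commute)
    ultimately show ?thesis
      using D_pos by (simp add: DERIV_imp_deriv)
  qed
  ultimately have "cmod (deriv k 0) \<le> D"
    using D_pos by (simp add: norm_divide divide_le_eq)
  then show ?thesis
    by (simp add: D_def c_def)
qed

lemma Schwarz_factor:
  assumes hol: "h holomorphic_on ball 0 1" and h0: "h 0 = 0"
    and maps: "\<And>z. z \<in> ball 0 1 \<Longrightarrow> h z \<in> ball 0 1"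
  obtains k where "k holomorphic_on ball 0 1" "\<And>z. z \<in> ball 0 1 \<Longrightarrow> cmod (k z) \<le> 1"
    "tcoef h 1 = k 0" "tcoef h 2 = deriv k 0"
proof -
  have "\<And>z. cmod z < 1 \<Longrightarrow> cmod (h z) < 1"
    using maps by auto
  note Schwarz = Schwarz_Lemma[OF hol h0 this]
  obtain k where khol: "k holomorphic_on ball 0 1" and hk: "\<And>z. cmod z < 1 \<Longrightarrow> h z = z * k z"
    and k0: "deriv h 0 = k 0"
    using Schwarz3[OF hol h0] by blast
  have "cmod (k z) \<le> 1" if "z \<in> ball 0 1" for z
  proof (cases "z = 0")
    case True
    then show ?thesis using Schwarz(2)[of 0] k0 by simp
  next
    case False
    then show ?thesis
      using Schwarz(1)[of z] hk[of z] that by (simp add: norm_mult)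
  qed
  moreover have "(\<lambda>z. z * k z) has_fps_expansion fps_X * Abs_fps (tcoef k)"
    by (intro has_fps_expansion_mult has_fps_expansion_fps_X has_fps_expansion_tcoef khol)
  then have "h has_fps_expansion fps_X * Abs_fps (tcoef k)"
    by (rule has_fps_expansion_transfer_ball[of _ _ 1]) (simp_all add: hk)
  then have "tcoef h 2 = deriv k 0"
    by (simp add: tcoef_conv_fps_nth numeral_2_eq_2) (simp add: tcoef_def)
  moreover have "tcoef h 1 = k 0"
    using k0 by (simp add: tcoef_def)
  ultimately show ?thesis
    using that khol by blast
qed

lemma Schwarz_second_coeff:
  assumes hol: "h holomorphic_on ball 0 1" and h0: "h 0 = 0"
    and maps: "\<And>z. z \<in> ball 0 1 \<Longrightarrow> h z \<in> ball 0 1"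
  shows "cmod (tcoef h 1) \<le> 1" "cmod (tcoef h 2) \<le> 1 - (cmod (tcoef h 1))\<^sup>2"
proof -
  obtain k where khol: "k holomorphic_on ball 0 1" and kbnd: "\<And>z. z \<in> ball 0 1 \<Longrightarrow> cmod (k z) \<le> 1"
    and c1: "tcoef h 1 = k 0" and c2: "tcoef h 2 = deriv k 0"
    using Schwarz_factor[OF assms] by blast
  show "cmod (tcoef h 1) \<le> 1"
    using kbnd[of 0] c1 by simp
  show "cmod (tcoef h 2) \<le> 1 - (cmod (tcoef h 1))\<^sup>2"
  proof (cases "cmod (tcoef h 1) = 1")
    case True
    have "\<And>z. cmod z < 1 \<Longrightarrow> cmod (h z) < 1"
      using maps by auto
    then have "\<exists>\<alpha>. (\<forall>z. cmod z < 1 \<longrightarrow> h z = \<alpha> * z) \<and> cmod \<alpha> = 1"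
      using Schwarz_Lemma(3)[OF hol h0 _ _, of 0] True by (simp add: tcoef_def)
    then obtain \<alpha> where h_lin: "\<And>z. cmod z < 1 \<Longrightarrow> h z = \<alpha> * z"
      by blast
    have "(\<lambda>z. \<alpha> * z) has_fps_expansion fps_const \<alpha> * fps_X"
      by (intro fps_expansion_intros)
    then have "h has_fps_expansion fps_const \<alpha> * fps_X"
      by (rule has_fps_expansion_transfer_ball[of _ _ 1]) (simp_all add: h_lin)
    then show ?thesis
      using True by (simp add: tcoef_conv_fps_nth)
  next
    case False
    then show ?thesis
      using norm_deriv_le_Schwarz_Pick[OF khol kbnd] kbnd[of 0] c1 c2 by simp
  qed
qed

section \<open>Coefficient relations of the class\<close>

definition odd_quotient_fps :: "complex fps \<Rightarrow> complex fps" where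
  "odd_quotient_fps A = Abs_fps (\<lambda>n. if even n then A $ Suc n else 0)"

lemma odd_quotient_has_fps_expansion:
  assumes F: "F has_fps_expansion A"
  shows "(\<lambda>x. if x = 0 then A $ 1 else (F x - F (- x)) / (2 * x)) has_fps_expansion odd_quotient_fps A"
proof -
  define D where "D = fps_const (1 / 2) * (A - (A oo - fps_X))"
  have minus: "(\<lambda>x. - x) has_fps_expansion - fps_X"
    by (intro fps_expansion_intros)
  have "(\<lambda>x. F (- x)) has_fps_expansion (A oo - fps_X)"
    using has_fps_expansion_compose[OF F minus] by (simp add: o_def)
  then have "(\<lambda>x. 1 / 2 * (F x - F (- x))) has_fps_expansion D"
    unfolding D_def using F by (intro has_fps_expansion_cmult_left has_fps_expansion_diff)
  moreover have D_nth: "D $ n = (if odd n then A $ n else 0)" for n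
    by (simp add: D_def fps_compose_uminus')
  ultimately have "(\<lambda>x. if x = 0 then D $ 1 else 1 / 2 * (F x - F (- x)) / x) has_fps_expansion fps_shift 1 D"
    by (intro has_fps_expansion_divide_X) simp_all
  moreover have "fps_shift 1 D = odd_quotient_fps A"
    by (simp add: fps_eq_iff D_nth odd_quotient_fps_def)
  moreover have "(\<lambda>x. if x = 0 then D $ 1 else 1 / 2 * (F x - F (- x)) / x)
      = (\<lambda>x. if x = 0 then A $ 1 else (F x - F (- x)) / (2 * x))"
    by (intro ext) (simp add: D_nth)
  ultimately show ?thesis
    by simp
qed

definition qderiv_fps :: "real \<Rightarrow> complex fps \<Rightarrow> complex fps" where
  "qderiv_fps q A = Abs_fps (\<lambda>n. qnum q (of_nat (Suc n)) * A $ Suc n)"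

lemma sym_qderiv_has_fps_expansion:
  assumes q: "0 < q" "q \<noteq> 1" and F: "F has_fps_expansion A"
  shows "sym_qderiv q F has_fps_expansion qderiv_fps q A"
proof -
  define c where "c = complex_of_real q"
  have c: "c \<noteq> 0" "c - inverse c \<noteq> 0"
    using q q_minus_inverse_neq_0[OF q] by (simp_all add: c_def)
  define D where "D = fps_const (1 / (c - inverse c)) *
      ((A oo fps_const c * fps_X) - (A oo fps_const (inverse c) * fps_X))"
  have dilate: "(\<lambda>x. F (d * x)) has_fps_expansion (A oo fps_const d * fps_X)" for d
  proof -
    have linear: "(\<lambda>x. d * x) has_fps_expansion fps_const d * fps_X"
      by (intro fps_expansion_intros)
    show ?thesis
      using has_fps_expansion_compose[OF F linear] by (simp add: o_def)
  qed
  have "(\<lambda>x. 1 / (c - inverse c) * (F (c * x) - F (inverse c * x))) has_fps_expansion D"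
    unfolding D_def by (intro has_fps_expansion_cmult_left has_fps_expansion_diff dilate)
  moreover have D_nth: "D $ n = qnum q (of_nat n) * A $ n" for n
    using c by (simp add: D_def) (simp add: qnum_of_nat[OF q(1)] c_def[symmetric] field_simps)
  ultimately have "(\<lambda>x. if x = 0 then D $ 1 else 1 / (c - inverse c) * (F (c * x) - F (inverse c * x)) / x)
      has_fps_expansion fps_shift 1 D"
    by (intro has_fps_expansion_divide_X) simp_all
  moreover have "fps_shift 1 D = qderiv_fps q A"
    by (simp add: fps_eq_iff D_nth qderiv_fps_def)
  moreover have "(\<lambda>x. if x = 0 then D $ 1 else 1 / (c - inverse c) * (F (c * x) - F (inverse c * x)) / x)
      = sym_qderiv q F"
  proof
    fix x
    have "deriv F 0 = A $ 1"
      using fps_nth_fps_expansion[OF F, of 1] by simp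
    then show "(if x = 0 then D $ 1 else 1 / (c - inverse c) * (F (c * x) - F (inverse c * x)) / x)
        = sym_qderiv q F x"
      using c by (simp add: D_nth qnum_1[OF q] sym_qderiv_def c_def[symmetric] divide_inverse mult_ac)
  qed
  ultimately show ?thesis
    by simp
qed

definition Jq_fps :: "real \<Rightarrow> complex \<Rightarrow> (complex \<Rightarrow> complex) \<Rightarrow> complex fps" where
  "Jq_fps q \<eta> f = fps_X + Abs_fps (\<lambda>n. if 2 \<le> n then Lq q \<eta> n * tcoef f n else 0)"

lemma Jq_fps_nth:
  "Jq_fps q \<eta> f $ n = (if n = 1 then 1 else if 2 \<le> n then Lq q \<eta> n * tcoef f n else 0)"
  by (simp add: Jq_fps_def)

lemma Jq_has_fps_expansion:
  assumes q: "0 < q" "q < 1" and \<eta>: "-1 < Re \<eta>" and hol: "f holomorphic_on ball 0 1"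
  shows "Jq q \<eta> f has_fps_expansion Jq_fps q \<eta> f"
proof -
  define T where "T = Abs_fps (\<lambda>n. if 2 \<le> n then Lq q \<eta> n * tcoef f n else 0)"
  have "fps_conv_radius (Abs_fps (tcoef f)) \<le> fps_conv_radius T"
  proof (rule fps_conv_radius_le_of_norm_nth_le)
    fix n
    show "cmod (T $ n) \<le> cmod (qnum q (1 + \<eta>)) * cmod (Abs_fps (tcoef f) $ n)"
      using norm_Lq_le[OF q \<eta>, of n] by (auto simp: T_def norm_mult intro: mult_right_mono)
  qed
  moreover have "0 < fps_conv_radius (Abs_fps (tcoef f))"
    using has_fps_expansion_tcoef[OF hol] by (simp add: has_fps_expansion_def)
  ultimately have "eval_fps T has_fps_expansion T"
    by (intro eval_fps_has_fps_expansion) order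
  then have "(\<lambda>z. z + eval_fps T z) has_fps_expansion fps_X + T"
    by (intro has_fps_expansion_add has_fps_expansion_fps_X)
  moreover have "T $ n * z ^ n = (if 2 \<le> n then Lq q \<eta> n * tcoef f n * z ^ n else 0)" for n z
    by (simp add: T_def)
  then have "Jq q \<eta> f = (\<lambda>z. z + eval_fps T z)"
    by (intro ext) (simp add: Jq_def eval_fps_def)
  ultimately show ?thesis
    by (simp add: Jq_fps_def T_def)
qed

lemma qexpr_has_fps_expansion:
  assumes q: "0 < q" "q \<noteq> 1" and F: "F has_fps_expansion A" and A1: "A $ 1 = 1"
  shows "qexpr q lam F has_fps_expansion
           (fps_binomial (of_real lam) oo (qderiv_fps q A - 1)) / odd_quotient_fps A"
proof -
  define K where "K = qderiv_fps q A"
  define Odd where "Odd = odd_quotient_fps A"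
  have K0: "(K - 1) $ 0 = 0"
    using A1 qnum_1[OF q] by (simp add: K_def qderiv_fps_def)
  have shifted: "(\<lambda>x. sym_qderiv q F x - 1) has_fps_expansion K - 1"
    unfolding K_def using sym_qderiv_has_fps_expansion[OF q F] by (intro fps_expansion_intros)
  have power: "(\<lambda>x. sym_qderiv q F x powr of_real lam) has_fps_expansion
      (fps_binomial (of_real lam) oo (K - 1))"
    using has_fps_expansion_compose[OF has_fps_expansion_binomial_complex shifted K0]
    by (simp add: o_def)
  have odd: "(\<lambda>x. if x = 0 then 1 else (F x - F (- x)) / (2 * x)) has_fps_expansion Odd"
    using odd_quotient_has_fps_expansion[OF F, unfolded A1] by (simp add: Odd_def)
  have Odd0: "Odd $ 0 = 1"
    using A1 by (simp add: Odd_def odd_quotient_fps_def)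
  have "(\<lambda>x. if x = 0 then 1 else sym_qderiv q F x powr of_real lam /
      (if x = 0 then 1 else (F x - F (- x)) / (2 * x)))
      has_fps_expansion (fps_binomial (of_real lam) oo (K - 1)) / Odd"
    using Odd0 by (intro has_fps_expansion_divide[OF power odd]) (auto simp: subdegree_eq_0_iff)
  \<comment> \<open>Where \<open>F x = F (- x)\<close> both sides are \<open>0\<close>, by the convention \<open>a / 0 = 0\<close>.\<close>
  moreover have "(\<lambda>x. if x = 0 then 1 else sym_qderiv q F x powr of_real lam /
      (if x = 0 then 1 else (F x - F (- x)) / (2 * x))) = qexpr q lam F"
    by (intro ext) (simp add: qexpr_def)
  ultimately show ?thesis
    by (simp add: K_def Odd_def)
qed

lemma subordinate_qexpr_fps_identity:
  assumes q: "0 < q" "q \<noteq> 1" and F: "F has_fps_expansion A" and A1: "A $ 1 = 1"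
    and \<phi>: "\<phi> holomorphic_on ball 0 1"
    and sub: "subordinate (qexpr q lam F) \<phi>"
  obtains h where "h holomorphic_on ball 0 1" "h 0 = 0" "\<And>z. z \<in> ball 0 1 \<Longrightarrow> h z \<in> ball 0 1"
    "(Abs_fps (tcoef \<phi>) oo Abs_fps (tcoef h)) * odd_quotient_fps A
       = fps_binomial (of_real lam) oo (qderiv_fps q A - 1)"
proof -
  obtain h where hol: "h holomorphic_on ball 0 1" and h0: "h 0 = 0"
    and maps: "\<And>z. z \<in> ball 0 1 \<Longrightarrow> h z \<in> ball 0 1"
    and eq: "\<And>z. z \<in> ball 0 1 \<Longrightarrow> qexpr q lam F z = \<phi> (h z)"
    using sub unfolding subordinate_def by blast
  define B where "B = fps_binomial (of_real lam) oo (qderiv_fps q A - 1)"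
  have "Abs_fps (tcoef h) $ 0 = 0"
    using h0 by (simp add: tcoef_def)
  then have "(\<lambda>z. \<phi> (h z)) has_fps_expansion (Abs_fps (tcoef \<phi>) oo Abs_fps (tcoef h))"
    using has_fps_expansion_compose[OF has_fps_expansion_tcoef[OF \<phi>] has_fps_expansion_tcoef[OF hol]]
    by (simp add: o_def)
  moreover have "qexpr q lam F has_fps_expansion B / odd_quotient_fps A"
    unfolding B_def by (rule qexpr_has_fps_expansion[OF q F A1])
  then have "(\<lambda>z. \<phi> (h z)) has_fps_expansion B / odd_quotient_fps A"
    by (rule has_fps_expansion_transfer_ball[of _ _ 1]) (simp_all add: eq)
  ultimately have "Abs_fps (tcoef \<phi>) oo Abs_fps (tcoef h) = B / odd_quotient_fps A"
    by (rule fps_expansion_unique_complex)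
  moreover have "odd_quotient_fps A $ 0 = 1"
    using A1 by (simp add: odd_quotient_fps_def)
  ultimately have "(Abs_fps (tcoef \<phi>) oo Abs_fps (tcoef h)) * odd_quotient_fps A = B"
    by (simp add: fps_divide_unit mult.assoc inverse_mult_eq_1)
  then show ?thesis
    using that hol h0 maps by (simp add: B_def)
qed

lemma subordinate_qexpr_coeffs:
  assumes q: "0 < q" "q \<noteq> 1" and F: "F has_fps_expansion A" and A1: "A $ 1 = 1"
    and \<phi>: "\<phi> holomorphic_on ball 0 1" "\<phi> 0 = 1"
    and sub: "subordinate (qexpr q lam F) \<phi>"
  obtains c1 c2 where "cmod c1 \<le> 1" "cmod c2 \<le> 1 - (cmod c1)\<^sup>2"
    "tcoef \<phi> 1 * c1 = of_real lam * qnum q 2 * A $ 2"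
    "tcoef \<phi> 1 * c2 + tcoef \<phi> 2 * c1\<^sup>2 + A $ 3
       = of_real lam * qnum q 3 * A $ 3 + of_real lam * (of_real lam - 1) / 2 * (qnum q 2 * A $ 2)\<^sup>2"
proof -
  obtain h where hol: "h holomorphic_on ball 0 1" and h0: "h 0 = 0"
    and maps: "\<And>z. z \<in> ball 0 1 \<Longrightarrow> h z \<in> ball 0 1"
    and product: "(Abs_fps (tcoef \<phi>) oo Abs_fps (tcoef h)) * odd_quotient_fps A
       = fps_binomial (of_real lam) oo (qderiv_fps q A - 1)"
    using subordinate_qexpr_fps_identity[OF q F A1 \<phi>(1) sub] by blast
  define K where "K = qderiv_fps q A"
  have H0: "Abs_fps (tcoef h) $ 0 = 0"
    using h0 by (simp add: tcoef_def)
  have coeffs: "tcoef \<phi> 0 = 1" "odd_quotient_fps A $ 0 = 1" "odd_quotient_fps A $ 1 = 0"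
      "odd_quotient_fps A $ 2 = A $ 3" "(K - 1) $ 0 = 0" "K $ 1 = qnum q 2 * A $ 2" "K $ 2 = qnum q 3 * A $ 3"
    using \<phi>(2) A1 qnum_1[OF q]
    by (simp_all add: tcoef_def odd_quotient_fps_def K_def qderiv_fps_def numeral_3_eq_3 numeral_2_eq_2)
  note nth = fps_mult_nth_12 fps_compose_nth_123[OF H0] fps_compose_nth_123[OF coeffs(5)]
  have "tcoef \<phi> 1 * tcoef h 1 = of_real lam * qnum q 2 * A $ 2"
    using arg_cong[OF product, of "\<lambda>X. X $ 1"] unfolding nth K_def[symmetric]
    by (simp add: coeffs[unfolded One_nat_def])
  moreover have "tcoef \<phi> 1 * tcoef h 2 + tcoef \<phi> 2 * (tcoef h 1)\<^sup>2 + A $ 3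
      = of_real lam * qnum q 3 * A $ 3 + of_real lam * (of_real lam - 1) / 2 * (qnum q 2 * A $ 2)\<^sup>2"
    using arg_cong[OF product, of "\<lambda>X. X $ 2"] unfolding nth K_def[symmetric]
    by (simp add: coeffs[unfolded One_nat_def] H0 gbinomial_2 algebra_simps)
  ultimately show ?thesis
    using that Schwarz_second_coeff[OF hol h0 maps] by blast
qed

lemma inverse_extension_tcoef:
  assumes hol: "f holomorphic_on ball 0 1" and f0: "f 0 = 0" and f1: "deriv f 0 = 1"
    and inv: "inverse_extension f g"
  shows "tcoef g 2 = - tcoef f 2" "tcoef g 3 = 2 * (tcoef f 2)\<^sup>2 - tcoef f 3"
proof -
  have ghol: "g holomorphic_on ball 0 1" and gf: "\<And>z. z \<in> ball 0 1 \<Longrightarrow> f z \<in> ball 0 1 \<Longrightarrow> g (f z) = z"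
    using inv unfolding inverse_extension_def by auto
  define F G where "F = Abs_fps (tcoef f)" and "G = Abs_fps (tcoef g)"
  have fexp: "f has_fps_expansion F"
    unfolding F_def by (rule has_fps_expansion_tcoef[OF hol])
  have F0: "F $ 0 = 0" and F1: "F $ 1 = 1"
    using f0 f1 by (simp_all add: F_def tcoef_def)
  have comp: "(\<lambda>z. g (f z)) has_fps_expansion (G oo F)"
    using has_fps_expansion_compose[OF has_fps_expansion_tcoef[OF ghol] fexp F0] by (simp add: o_def G_def)
  have inverse_near_0: "\<forall>\<^sub>F z in nhds 0. g (f z) = z"
  proof -
    have "isCont f 0"
      using has_fps_expansion_imp_continuous[OF fexp, of UNIV] by simp
    then have "\<forall>\<^sub>F z in at 0. f z \<in> ball 0 1"
      using f0 unfolding isCont_def by (intro topological_tendstoD) auto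
    then have "\<forall>\<^sub>F z in nhds 0. f z \<in> ball 0 1"
      using f0 by (simp add: eventually_nhds_conv_at)
    moreover have "\<forall>\<^sub>F z in nhds 0. z \<in> ball 0 1"
      by (intro eventually_nhds_in_open) auto
    ultimately show ?thesis
      by eventually_elim (simp add: gf)
  qed
  have "(\<lambda>z. z) has_fps_expansion (G oo F)"
    using has_fps_expansion_cong[OF inverse_near_0 refl] comp by simp
  then have "G oo F = fps_X"
    using has_fps_expansion_fps_X by (rule fps_expansion_unique_complex)
  note G = fps_compose_inverse_coeffs[OF this F0 F1]
  show "tcoef g 2 = - tcoef f 2" "tcoef g 3 = 2 * (tcoef f 2)\<^sup>2 - tcoef f 3"
    using G(2,3) by (simp_all add: F_def G_def)
qed

section \<open>Coefficient estimates\<close>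

lemma bi_coefficient_identities:
  fixes E1 E2 l Q2 Q3 L2 L3 a2 a3 c1 c2 d1 d2 :: complex
  assumes f1: "E1 * c1 = l * Q2 * (L2 * a2)"
    and f2: "E1 * c2 + E2 * c1\<^sup>2 + L3 * a3
      = l * Q3 * (L3 * a3) + l * (l - 1) / 2 * (Q2 * (L2 * a2))\<^sup>2"
    and g1: "E1 * d1 = l * Q2 * (L2 * - a2)"
    and g2: "E1 * d2 + E2 * d1\<^sup>2 + L3 * (2 * a2\<^sup>2 - a3)
      = l * Q3 * (L3 * (2 * a2\<^sup>2 - a3)) + l * (l - 1) / 2 * (Q2 * (L2 * - a2))\<^sup>2"
    and E1: "E1 \<noteq> 0"
  shows "(2 * (l * Q3 - 1) * L3 + l * (l - 1) * Q2\<^sup>2 * L2\<^sup>2) * a2\<^sup>2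
      = E1 * (c2 + c1\<^sup>2) + E1 * (d2 + d1\<^sup>2) + (E2 - E1) * (c1\<^sup>2 + d1\<^sup>2)"
    and "(2 * (l * Q3 - 1) * E1\<^sup>2 * L3 + l * ((l - 1) * E1\<^sup>2 + 2 * l * (E1 - E2)) * Q2\<^sup>2 * L2\<^sup>2) * a2\<^sup>2
      = E1 ^ 3 * ((c2 + c1\<^sup>2) + (d2 + d1\<^sup>2))"
    and "2 * (l * Q3 - 1) * L3 * (a3 - a2\<^sup>2) = E1 * (c2 - d2)"
proof -
  have f2': "2 * (E1 * c2 + E2 * c1\<^sup>2 + L3 * a3) = 2 * (l * Q3 * (L3 * a3)) + l * (l - 1) * (Q2 * (L2 * a2))\<^sup>2"
    using arg_cong[OF f2, of "\<lambda>x. 2 * x"] by (simp add: distrib_left)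
  have g2': "2 * (E1 * d2 + E2 * d1\<^sup>2 + L3 * (2 * a2\<^sup>2 - a3))
      = 2 * (l * Q3 * (L3 * (2 * a2\<^sup>2 - a3))) + l * (l - 1) * (Q2 * (L2 * - a2))\<^sup>2"
    using arg_cong[OF g2, of "\<lambda>x. 2 * x"] by (simp add: distrib_left)
  have "E1 * (c1 + d1) = 0"
    using f1 g1 by (simp add: algebra_simps)
  then have d1: "d1 = - c1"
    using E1 by (simp add: add_eq_0_iff)
  show "(2 * (l * Q3 - 1) * L3 + l * (l - 1) * Q2\<^sup>2 * L2\<^sup>2) * a2\<^sup>2
      = E1 * (c2 + c1\<^sup>2) + E1 * (d2 + d1\<^sup>2) + (E2 - E1) * (c1\<^sup>2 + d1\<^sup>2)"
    using f2' g2' by algebra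
  show "(2 * (l * Q3 - 1) * E1\<^sup>2 * L3 + l * ((l - 1) * E1\<^sup>2 + 2 * l * (E1 - E2)) * Q2\<^sup>2 * L2\<^sup>2) * a2\<^sup>2
      = E1 ^ 3 * ((c2 + c1\<^sup>2) + (d2 + d1\<^sup>2))"
    using f1 g1 f2' g2' by algebra
  show "2 * (l * Q3 - 1) * L3 * (a3 - a2\<^sup>2) = E1 * (c2 - d2)"
    using f2' g2' d1 by algebra
qed

lemma norm_Schwarz_coeff_combinations:
  assumes "cmod c1 \<le> 1" "cmod c2 \<le> 1 - (cmod c1)\<^sup>2"
  shows "cmod (c2 + c1\<^sup>2) \<le> 1" "cmod c2 \<le> 1" "cmod (c1\<^sup>2) \<le> 1"
proof -
  show "cmod (c2 + c1\<^sup>2) \<le> 1"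
    using norm_triangle_ineq[of c2 "c1\<^sup>2"] assms(2) by (simp add: norm_power)
  show "cmod c2 \<le> 1"
    using assms(2) zero_le_power2[of "cmod c1"] by linarith
  show "cmod (c1\<^sup>2) \<le> 1"
    using assms(1) by (simp add: norm_power power_le_one)
qed

lemma bi_coefficient_norm_bounds:
  fixes E1 E2 l Q2 Q3 L2 L3 a2 a3 c1 c2 d1 d2 \<Gamma> \<Xi> :: complex
  assumes E1: "E1 \<noteq> 0"
    and \<Gamma>: "\<Gamma> = 2 * (l * Q3 - 1) * L3 + l * (l - 1) * Q2\<^sup>2 * L2\<^sup>2"
    and \<Xi>: "\<Xi> = 2 * (l * Q3 - 1) * E1\<^sup>2 * L3 + l * ((l - 1) * E1\<^sup>2 + 2 * l * (E1 - E2)) * Q2\<^sup>2 * L2\<^sup>2"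
    and c: "cmod c1 \<le> 1" "cmod c2 \<le> 1 - (cmod c1)\<^sup>2"
    and f1: "E1 * c1 = l * Q2 * (L2 * a2)"
    and f2: "E1 * c2 + E2 * c1\<^sup>2 + L3 * a3
      = l * Q3 * (L3 * a3) + l * (l - 1) / 2 * (Q2 * (L2 * a2))\<^sup>2"
    and d: "cmod d1 \<le> 1" "cmod d2 \<le> 1 - (cmod d1)\<^sup>2"
    and g1: "E1 * d1 = l * Q2 * (L2 * - a2)"
    and g2: "E1 * d2 + E2 * d1\<^sup>2 + L3 * (2 * a2\<^sup>2 - a3)
      = l * Q3 * (L3 * (2 * a2\<^sup>2 - a3)) + l * (l - 1) / 2 * (Q2 * (L2 * - a2))\<^sup>2"
  shows "cmod (l * Q2) * cmod L2 * cmod a2 \<le> cmod E1"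
    and "cmod \<Gamma> * (cmod a2)\<^sup>2 \<le> 2 * (cmod (E2 - E1) + cmod E1)"
    and "cmod \<Xi> * (cmod a2)\<^sup>2 \<le> 2 * cmod E1 ^ 3"
    and "cmod (l * Q3 - 1) * cmod L3 * cmod (a3 - a2\<^sup>2) \<le> cmod E1"
proof -
  note identities = bi_coefficient_identities[OF f1 f2 g1 g2 E1, folded \<Gamma>, folded \<Xi>]
  note cs = norm_Schwarz_coeff_combinations[OF c] and ds = norm_Schwarz_coeff_combinations[OF d]
  have "cmod (l * Q2) * cmod L2 * cmod a2 = cmod E1 * cmod c1"
    using arg_cong[OF f1, of cmod] by (simp add: norm_mult mult.assoc)
  also have "\<dots> \<le> cmod E1"
    using c(1) by (simp add: mult_left_le)
  finally show "cmod (l * Q2) * cmod L2 * cmod a2 \<le> cmod E1" .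
  have "cmod \<Gamma> * (cmod a2)\<^sup>2 = cmod (\<Gamma> * a2\<^sup>2)"
    by (simp add: norm_mult norm_power)
  also have "\<dots> \<le> cmod (E1 * (c2 + c1\<^sup>2)) + cmod (E1 * (d2 + d1\<^sup>2)) + cmod ((E2 - E1) * (c1\<^sup>2 + d1\<^sup>2))"
    unfolding identities(1) by (rule order_trans[OF norm_triangle_ineq add_right_mono[OF norm_triangle_ineq]])
  also have "\<dots> \<le> cmod E1 + cmod E1 + cmod (E2 - E1) * 2"
  proof (intro add_mono)
    show "cmod (E1 * (c2 + c1\<^sup>2)) \<le> cmod E1" "cmod (E1 * (d2 + d1\<^sup>2)) \<le> cmod E1"
      using cs(1) ds(1) by (simp_all add: norm_mult mult_left_le)
    show "cmod ((E2 - E1) * (c1\<^sup>2 + d1\<^sup>2)) \<le> cmod (E2 - E1) * 2"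
      using cs(3) ds(3) norm_triangle_ineq[of "c1\<^sup>2" "d1\<^sup>2"] by (simp add: norm_mult mult_left_mono)
  qed
  finally show "cmod \<Gamma> * (cmod a2)\<^sup>2 \<le> 2 * (cmod (E2 - E1) + cmod E1)"
    by simp
  have "cmod \<Xi> * (cmod a2)\<^sup>2 = cmod E1 ^ 3 * cmod ((c2 + c1\<^sup>2) + (d2 + d1\<^sup>2))"
    using arg_cong[OF identities(2), of cmod] by (simp add: norm_mult norm_power)
  also have "\<dots> \<le> cmod E1 ^ 3 * 2"
    using cs(1) ds(1) norm_triangle_ineq[of "c2 + c1\<^sup>2" "d2 + d1\<^sup>2"]
    by (intro mult_left_mono) auto
  finally show "cmod \<Xi> * (cmod a2)\<^sup>2 \<le> 2 * cmod E1 ^ 3"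
    by simp
  have "2 * (cmod (l * Q3 - 1) * cmod L3 * cmod (a3 - a2\<^sup>2)) = cmod (2 * (l * Q3 - 1) * L3 * (a3 - a2\<^sup>2))"
    by (simp only: norm_mult) simp
  also have "\<dots> = cmod E1 * cmod (c2 - d2)"
    unfolding identities(3) by (rule norm_mult)
  also have "\<dots> \<le> cmod E1 * 2"
    using cs(2) ds(2) norm_triangle_ineq4[of c2 d2] by (intro mult_left_mono) auto
  finally show "cmod (l * Q3 - 1) * cmod L3 * cmod (a3 - a2\<^sup>2) \<le> cmod E1"
    by simp
qed

lemma qclass_coefficient_norm_bounds:
  fixes \<Gamma> \<Xi> :: complex
  assumes q: "0 < q" "q < 1" and \<eta>: "-1 < Re \<eta>"
    and \<phi>: "\<phi> holomorphic_on ball 0 1" "\<phi> 0 = 1" "tcoef \<phi> 1 \<noteq> 0"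
    and \<Gamma>: "\<Gamma> = 2 * (of_real lam * qnum q 3 - 1) * Lq q \<eta> 3
        + of_real lam * (of_real lam - 1) * (qnum q 2)\<^sup>2 * (Lq q \<eta> 2)\<^sup>2"
    and \<Xi>: "\<Xi> = 2 * (of_real lam * qnum q 3 - 1) * (tcoef \<phi> 1)\<^sup>2 * Lq q \<eta> 3
        + of_real lam * ((of_real lam - 1) * (tcoef \<phi> 1)\<^sup>2 + 2 * of_real lam * (tcoef \<phi> 1 - tcoef \<phi> 2))
          * (qnum q 2)\<^sup>2 * (Lq q \<eta> 2)\<^sup>2"
    and f: "f \<in> qclass q \<eta> lam \<phi>"
  shows "cmod (of_real lam * qnum q 2) * cmod (Lq q \<eta> 2) * cmod (tcoef f 2) \<le> cmod (tcoef \<phi> 1)"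
    and "cmod \<Gamma> * (cmod (tcoef f 2))\<^sup>2 \<le> 2 * (cmod (tcoef \<phi> 2 - tcoef \<phi> 1) + cmod (tcoef \<phi> 1))"
    and "cmod \<Xi> * (cmod (tcoef f 2))\<^sup>2 \<le> 2 * cmod (tcoef \<phi> 1) ^ 3"
    and "cmod (of_real lam * qnum q 3 - 1) * cmod (Lq q \<eta> 3) * cmod (tcoef f 3 - (tcoef f 2)\<^sup>2)
      \<le> cmod (tcoef \<phi> 1)"
proof -
  obtain g where bi: "bi_univalent f" and inv: "inverse_extension f g"
    and sub_f: "subordinate (qexpr q lam (Jq q \<eta> f)) \<phi>"
    and sub_g: "subordinate (qexpr q lam (Jq q \<eta> g)) \<phi>"
    using f unfolding qclass_def by blast
  have fhol: "f holomorphic_on ball 0 1" and "f 0 = 0" "deriv f 0 = 1"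
    using bi unfolding bi_univalent_def by auto
  note g_coeffs = inverse_extension_tcoef[OF this inv]
  have ghol: "g holomorphic_on ball 0 1"
    using inv unfolding inverse_extension_def by auto
  have "q \<noteq> 1"
    using q by simp
  note coeffs = subordinate_qexpr_coeffs[OF q(1) this Jq_has_fps_expansion[OF q \<eta>] _ \<phi>(1,2)]
  obtain c1 c2 where c: "cmod c1 \<le> 1" "cmod c2 \<le> 1 - (cmod c1)\<^sup>2"
    and f1: "tcoef \<phi> 1 * c1 = of_real lam * qnum q 2 * (Lq q \<eta> 2 * tcoef f 2)"
    and f2: "tcoef \<phi> 1 * c2 + tcoef \<phi> 2 * c1\<^sup>2 + Lq q \<eta> 3 * tcoef f 3
       = of_real lam * qnum q 3 * (Lq q \<eta> 3 * tcoef f 3)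
         + of_real lam * (of_real lam - 1) / 2 * (qnum q 2 * (Lq q \<eta> 2 * tcoef f 2))\<^sup>2"
    using coeffs[OF fhol _ sub_f] by (auto simp: Jq_fps_nth mult.assoc)
  obtain d1 d2 where d: "cmod d1 \<le> 1" "cmod d2 \<le> 1 - (cmod d1)\<^sup>2"
    and g1: "tcoef \<phi> 1 * d1 = of_real lam * qnum q 2 * (Lq q \<eta> 2 * - tcoef f 2)"
    and g2: "tcoef \<phi> 1 * d2 + tcoef \<phi> 2 * d1\<^sup>2 + Lq q \<eta> 3 * (2 * (tcoef f 2)\<^sup>2 - tcoef f 3)
       = of_real lam * qnum q 3 * (Lq q \<eta> 3 * (2 * (tcoef f 2)\<^sup>2 - tcoef f 3))
         + of_real lam * (of_real lam - 1) / 2 * (qnum q 2 * (Lq q \<eta> 2 * - tcoef f 2))\<^sup>2"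
    using coeffs[OF ghol _ sub_g] g_coeffs by (auto simp: Jq_fps_nth mult.assoc)
  show "cmod (of_real lam * qnum q 2) * cmod (Lq q \<eta> 2) * cmod (tcoef f 2) \<le> cmod (tcoef \<phi> 1)"
    and "cmod \<Gamma> * (cmod (tcoef f 2))\<^sup>2 \<le> 2 * (cmod (tcoef \<phi> 2 - tcoef \<phi> 1) + cmod (tcoef \<phi> 1))"
    and "cmod \<Xi> * (cmod (tcoef f 2))\<^sup>2 \<le> 2 * cmod (tcoef \<phi> 1) ^ 3"
    and "cmod (of_real lam * qnum q 3 - 1) * cmod (Lq q \<eta> 3) * cmod (tcoef f 3 - (tcoef f 2)\<^sup>2)
      \<le> cmod (tcoef \<phi> 1)"
    by (fact bi_coefficient_norm_bounds[OF \<phi>(3) \<Gamma> \<Xi> c f1 f2 d g1 g2])+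
qed

lemma le_sqrt_of_mult_square_le:
  fixes x K B :: real
  assumes "0 < K" "0 \<le> x" "K * x\<^sup>2 \<le> B"
  shows "x \<le> sqrt (B / K)"
  using assms by (intro real_le_rsqrt) (simp add: pos_le_divide_eq mult.commute)

lemma coefficient_bounds_of_norm_bounds:
  fixes E1 e lam Q2 l2 M l3 G X x y z :: real
  assumes pos: "0 < E1" "0 < lam * Q2 * l2" "0 < M * l3" "0 < G" "0 < X" "0 \<le> x"
    and x1: "lam * Q2 * l2 * x \<le> E1" and x2: "G * x\<^sup>2 \<le> 2 * (e + E1)" and x3: "X * x\<^sup>2 \<le> 2 * E1 ^ 3"
    and y: "y \<le> x\<^sup>2 + z" and z: "M * l3 * z \<le> E1"
  shows "x \<le> min (E1 / (lam * l2 * Q2)) (min (sqrt (2 * (e + E1) / G)) (E1 * sqrt (2 * E1) / sqrt X))"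
    and "y \<le> E1 / (M * l3) + min (E1\<^sup>2 / (lam\<^sup>2 * Q2\<^sup>2 * l2\<^sup>2)) (2 * (e + E1) / G)"
proof -
  have "x \<le> E1 / (lam * l2 * Q2)"
    using x1 pos(2) by (simp add: pos_le_divide_eq mult_ac)
  moreover from power_mono[OF this pos(6), of 2]
  have "x\<^sup>2 \<le> E1\<^sup>2 / (lam\<^sup>2 * Q2\<^sup>2 * l2\<^sup>2)"
    by (simp add: power_divide power_mult_distrib mult_ac)
  moreover have "x\<^sup>2 \<le> 2 * (e + E1) / G"
    using x2 pos(4) by (simp add: pos_le_divide_eq mult.commute)
  moreover have "sqrt (2 * E1 ^ 3 / X) = E1 * sqrt (2 * E1) / sqrt X"
  proof -
    have "2 * E1 ^ 3 = E1\<^sup>2 * (2 * E1)"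
      by (simp add: power2_eq_square power3_eq_cube)
    then show ?thesis
      using pos(1) by (simp add: real_sqrt_divide real_sqrt_mult)
  qed
  moreover have "x \<le> sqrt (2 * E1 ^ 3 / X)"
    using le_sqrt_of_mult_square_le[OF pos(5,6) x3] .
  moreover have "z \<le> E1 / (M * l3)"
    using z pos(3) by (simp add: pos_le_divide_eq mult.commute)
  ultimately show "x \<le> min (E1 / (lam * l2 * Q2)) (min (sqrt (2 * (e + E1) / G)) (E1 * sqrt (2 * E1) / sqrt X))"
    and "y \<le> E1 / (M * l3) + min (E1\<^sup>2 / (lam\<^sup>2 * Q2\<^sup>2 * l2\<^sup>2)) (2 * (e + E1) / G)"
    using y by (simp_all add: real_le_rsqrt)
qed

theorem corollary1:
  fixes q lam E1 :: real and \<eta> E2 \<Gamma> \<Xi> :: complex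
    and \<phi> f :: "complex \<Rightarrow> complex"
  assumes "0 < q" "q < 1" "Re \<eta> > -1" "lam \<ge> 1"
    and "\<phi> holomorphic_on ball 0 1" "\<forall>z\<in>ball 0 1. Re (\<phi> z) > 0" "\<phi> 0 = 1"
    and "tcoef \<phi> 1 = complex_of_real E1" "E1 > 0" "tcoef \<phi> 2 = E2"
    and "\<Gamma> = 2 * (of_real lam * qnum q 3 - 1) * Lq q \<eta> 3
             + of_real lam * (of_real lam - 1) * (qnum q 2)\<^sup>2 * (Lq q \<eta> 2)\<^sup>2"
    and "\<Xi> = 2 * (of_real lam * qnum q 3 - 1) * (of_real E1)\<^sup>2 * Lq q \<eta> 3
             + of_real lam * ((of_real lam - 1) * (of_real E1)\<^sup>2 + 2 * of_real lam * (of_real E1 - E2))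
               * (qnum q 2)\<^sup>2 * (Lq q \<eta> 2)\<^sup>2"
    and "\<Gamma> \<noteq> 0" "\<Xi> \<noteq> 0"
    and "f \<in> qclass q \<eta> lam \<phi>"
  shows "(cmod (tcoef f 2) \<le> min (E1 / (lam * cmod (Lq q \<eta> 2) * Re (qnum q 2)))
            (min (sqrt (2 * (cmod (E2 - of_real E1) + E1) / cmod \<Gamma>))
                 (E1 * sqrt (2 * E1) / sqrt (cmod \<Xi>)))) \<and>
         cmod (tcoef f 3) \<le> E1 / ((lam * Re (qnum q 3) - 1) * cmod (Lq q \<eta> 3))
            + min (E1\<^sup>2 / (lam\<^sup>2 * (Re (qnum q 2))\<^sup>2 * (cmod (Lq q \<eta> 2))\<^sup>2))
                  (2 * (cmod (E2 - of_real E1) + E1) / cmod \<Gamma>)"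
proof -
  note q = assms(1,2) and \<eta> = assms(3) and E1 = assms(8,9)
  obtain Q2 Q3 where qnum: "qnum q 2 = of_real Q2" "qnum q 3 = of_real Q3"
    and Q: "0 < Q2" "0 < lam * Q3 - 1"
    using qnum_2_3_real[OF q assms(4)] .
  have "tcoef \<phi> 1 \<noteq> 0"
    using E1 by simp
  note bounds = qclass_coefficient_norm_bounds[OF q \<eta> assms(5,7) this assms(11)
      assms(12)[folded E1(1) assms(10)] assms(15),
      unfolded E1(1) assms(10) qnum norm_of_real abs_of_pos[OF E1(2)]]
  have "cmod (complex_of_real lam * of_real Q2) = lam * Q2"
    using Q assms(4) by (simp add: norm_mult)
  then have x1: "lam * Q2 * cmod (Lq q \<eta> 2) * cmod (tcoef f 2) \<le> E1"
    using bounds(1) by simp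
  have "cmod (complex_of_real lam * of_real Q3 - 1) = lam * Q3 - 1"
    using Q by (metis abs_of_pos norm_of_real of_real_1 of_real_diff of_real_mult)
  then have z: "(lam * Q3 - 1) * cmod (Lq q \<eta> 3) * cmod (tcoef f 3 - (tcoef f 2)\<^sup>2) \<le> E1"
    using bounds(4) by simp
  have y: "cmod (tcoef f 3) \<le> (cmod (tcoef f 2))\<^sup>2 + cmod (tcoef f 3 - (tcoef f 2)\<^sup>2)"
    using norm_triangle_ineq2[of "tcoef f 3" "(tcoef f 2)\<^sup>2"] by (simp add: norm_power)
  have "0 < lam * Q2 * cmod (Lq q \<eta> 2)" "0 < (lam * Q3 - 1) * cmod (Lq q \<eta> 3)"
    using Q assms(4) Lq_neq_0[OF q \<eta>] by simp_all
  from coefficient_bounds_of_norm_bounds[OF E1(2) this _ _ _ x1 bounds(2,3) y z] assms(13,14)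
  show ?thesis
    by (simp add: qnum)
qed

end
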